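(* With the notation in the context, for any fixed $k\ge0$ and any fixed $B$, with $D=x^{3/4}/(\log x)^B$, \[ \sum_{d<D}\tau(d)^k\,\#\mathcal C_d\ll x(\log x)^{2^{2k+3}} \] for both $\mathcal C=\mathcal A$ and $\mathcal C=\mathcal B$.
   Context: Let $x$ be large and $p$ always denote primes. Fix $X$ with $x^{1/2}/(\log x)^4\le X\le x^{1/2}$, let $\eta=(\log x)^{-1}$ and $I=(X,X(1+\eta)]$. Define sequences $\mathcal A=\{a(n)\}$, $\mathcal B=\{b(n)\}$ by: for $n\le x$, $a(n)=\sum 2p\log p$ over representations $n=a^2+p^4$ with $a$ a positive integer, $p^2\in I$, $(a,p)=1$; and $b(n)=\sum\log p$ over representations $n=a^2+p^2$ with $a$ a positive integer, $p\in I$, $(a,p)=1$; and $a(n)=b(n)=0$ for $n>x$. For a sequence $\mathcal C=\{c(n)\}$ set $\#\mathcal C_d=\sum_{d\mid n}c(n)$. $\tau$ is the divisor function. *)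

theory Defs
  imports Complex_Main "HOL-Computational_Algebra.Primes"
begin

definition tau :: "nat \<Rightarrow> nat" where
  "tau d = card {m. m dvd d}"

definition inI :: "real \<Rightarrow> real \<Rightarrow> real \<Rightarrow> bool" where
  "inI x X t \<longleftrightarrow> X < t \<and> t \<le> X * (1 + 1 / ln x)"

definition seqA :: "real \<Rightarrow> real \<Rightarrow> nat \<Rightarrow> real" where
  "seqA x X n = (if real n \<le> x then
     (\<Sum>(a,p) \<in> {(a,p). a \<ge> 1 \<and> prime p \<and> inI x X (real (p^2)) \<and> coprime a p
                      \<and> n = a^2 + p^4}. 2 * real p * ln (real p))
     else 0)"

definition seqB :: "real \<Rightarrow> real \<Rightarrow> nat \<Rightarrow> real" where
  "seqB x X n = (if real n \<le> x then
     (\<Sum>(a,p) \<in> {(a,p). a \<ge> 1 \<and> prime p \<and> inI x X (real p) \<and> coprime a p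
                      \<and> n = a^2 + p^2}. ln (real p))
     else 0)"

definition countd :: "(nat \<Rightarrow> real) \<Rightarrow> real \<Rightarrow> nat \<Rightarrow> real" where
  "countd c x d = (\<Sum>n \<in> {n. real n \<le> x \<and> d dvd n}. c n)"

end

theory Submission
  imports Defs
begin

text \<open>Swapping the sums gives \<Sigma>_d \<tau>(d)^k #C_d \<le> \<Sigma>_n c(n) \<tau>(n)^(k+1). For n = a^2 + h (h = p^4 resp. p^2) one has \<tau>(n) \<le> 2 \<tau>(d)^2 for some d | n
  with d \<le> \<surd>x, and for fixed h and d the a \<le> \<surd>x coprime to h with d | a^2 + h lie in at most
  2 \<tau>(d) classes modulo d/2. So the sum over a is O(\<surd>x \<Sigma>_{d \<le> \<surd>x} \<tau>(d)^(2k+3)/d), and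
  submultiplicativity of \<tau> gives \<Sigma>_{d \<le> M} \<tau>(d)^(L+1)/d \<le> (\<Sigma>_{d \<le> M} \<tau>(d)^L/d)^2, whence
  O(\<surd>x (log x)^(2^(2k+3))). The weights of the primes p in the short interval add up to O(\<surd>x).\<close>

lemma tau_mono: "d dvd n \<Longrightarrow> n > 0 \<Longrightarrow> tau d \<le> tau n"
  unfolding tau_def by (rule card_mono) (auto intro: dvd_trans)

lemma tau_mult_le:
  assumes "a > 0" "b > 0"
  shows "tau (a * b) \<le> tau a * tau b"
proof -
  have "{m. m dvd a * b} \<subseteq> (\<lambda>(u, v). u * v) ` ({u. u dvd a} \<times> {v. v dvd b})"
    by (auto dest!: division_decomp)
  hence "tau (a * b) \<le> card ((\<lambda>(u, v). u * v) ` ({u. u dvd a} \<times> {v. v dvd b}))"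
    unfolding tau_def using assms by (intro card_mono) auto
  also have "\<dots> \<le> card ({u. u dvd a} \<times> {v. v dvd b})"
    using assms by (intro card_image_le) auto
  finally show ?thesis by (simp add: tau_def card_cartesian_product)
qed

lemma tau_prime: "prime q \<Longrightarrow> tau q = 2"
proof -
  assume q: "prime q"
  hence "{m. m dvd q} = {1, q}" by (auto simp: prime_nat_iff)
  thus ?thesis using prime_gt_1_nat[OF q] by (simp add: tau_def)
qed

lemma sum_tau_pow_divisors_le:
  assumes "n > 0"
  shows "(\<Sum>d | d dvd n. real (tau d) ^ k) \<le> real (tau n) ^ Suc k"
proof -
  have "(\<Sum>d | d dvd n. real (tau d) ^ k) \<le> (\<Sum>d | d dvd n. real (tau n) ^ k)"
    using assms by (intro sum_mono power_mono) (auto intro: tau_mono)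
  also have "\<dots> = real (tau n) ^ Suc k" by (simp add: tau_def)
  finally show ?thesis .
qed

text \<open>Take the largest divisor d of n with d^2 \<le> n and a prime q dividing n/d: by maximality
  (dq)^2 > n, so the cofactor e = n/(dq) also satisfies e^2 \<le> n, and
  \<tau>(n) \<le> \<tau>(d) \<tau>(q) \<tau>(e) = 2 \<tau>(d) \<tau>(e).\<close>
lemma tau_le_small_divisors:
  assumes "n > 0"
  obtains d e where "d dvd n" "e dvd n" "d^2 \<le> n" "e^2 \<le> n" "tau n \<le> 2 * tau d * tau e"
proof -
  let ?S = "{d. d dvd n \<and> d^2 \<le> n}"
  define d where "d = Max ?S"
  have fin: "finite ?S" and one: "1 \<in> ?S" using assms by auto
  have dS: "d \<in> ?S" unfolding d_def using fin one Max_in by blast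
  have dmax: "\<And>c. c \<in> ?S \<Longrightarrow> c \<le> d" unfolding d_def using fin by simp
  have dpos: "d > 0" using dS assms by (auto intro: Nat.gr0I)
  show thesis
  proof (cases "d = n")
    case True
    with dS assms have "n = 1" by (simp add: power2_eq_square)
    thus thesis by (intro that[of 1 1]) (auto simp: tau_def)
  next
    case False
    obtain r where r: "n = d * r" using dS by blast
    with False assms have "r \<noteq> 1" "r > 0" by auto
    then obtain q where q: "prime q" "q dvd r" using prime_factor_nat[of r] by auto
    then obtain e where ne: "n = (d * q) * e" using r by (auto elim!: dvdE)
    have "d * q \<notin> ?S" using dmax[of "d * q"] dpos prime_gt_1_nat[OF q(1)] by auto
    hence big: "n < (d * q)^2" using ne by auto
    have epos: "e > 0" and qpos: "q > 0" using ne assms prime_gt_0_nat[OF q(1)] by (auto intro: Nat.gr0I)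
    have "e^2 \<le> n"
    proof (rule ccontr)
      assume "\<not> e^2 \<le> n"
      hence "n * n < e^2 * (d * q)^2" using big epos by (intro mult_strict_mono) auto
      thus False using ne by (simp add: power2_eq_square algebra_simps)
    qed
    moreover have "tau n \<le> 2 * tau d * tau e"
    proof -
      have "tau n \<le> tau d * tau (q * e)"
        using ne dpos epos qpos tau_mult_le[of d "q * e"] by (simp add: mult.assoc)
      also have "\<dots> \<le> tau d * (tau q * tau e)"
        using epos qpos by (intro mult_left_mono tau_mult_le) auto
      finally show ?thesis using tau_prime[OF q(1)] by simp
    qed
    ultimately show thesis using dS ne by (intro that[of d e]) auto
  qed
qed

lemma tau_pow_le_sum_small_divisors:
  assumes "n > 0" "\<And>d. d^2 \<le> n \<Longrightarrow> d \<le> M"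
  shows "real (tau n) ^ m \<le> 2^m * (\<Sum>d\<in>{1..M}. if d dvd n then real (tau d) ^ (2*m) else 0)"
proof -
  obtain d e where de: "d dvd n" "e dvd n" "d^2 \<le> n" "e^2 \<le> n" "tau n \<le> 2 * tau d * tau e"
    using tau_le_small_divisors[OF assms(1)] by blast
  obtain c where c: "c dvd n" "c^2 \<le> n" "tau n \<le> 2 * tau c * tau c"
  proof (cases "tau d \<le> tau e")
    case True
    with de show thesis by (intro that[of e]) (auto intro: order.trans mult_le_mono)
  next
    case False
    with de show thesis by (intro that[of d]) (auto intro: order.trans mult_le_mono)
  qed
  have cM: "c \<in> {1..M}" using c assms by (auto intro: Nat.gr0I simp: Suc_le_eq)
  have "real (tau n) ^ m \<le> (2 * real (tau c) ^ 2) ^ m"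
    using c(3) by (intro power_mono) (auto simp: power2_eq_square simp flip: of_nat_mult)
  also have "\<dots> = 2^m * real (tau c) ^ (2*m)" by (simp add: power_mult_distrib power_mult)
  also have "\<dots> \<le> 2^m * (\<Sum>d\<in>{1..M}. if d dvd n then real (tau d) ^ (2*m) else 0)"
    using member_le_sum[OF cM, of "\<lambda>d. if d dvd n then real (tau d) ^ (2*m) else 0"] c(1)
    by simp
  finally show ?thesis .
qed

definition tau_harmonic_sum :: "nat \<Rightarrow> nat \<Rightarrow> real" where
  "tau_harmonic_sum L M = (\<Sum>d\<in>{1..M}. real (tau d) ^ L / real d)"

lemma tau_harmonic_sum_nonneg: "tau_harmonic_sum L M \<ge> 0"
  unfolding tau_harmonic_sum_def by (intro sum_nonneg) auto

lemma harmonic_sum_le_ln: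
  fixes M :: nat
  assumes "M \<ge> 1"
  shows "(\<Sum>d\<in>{1..M}. 1 / real d) \<le> 1 + ln (real M)"
  using assms
proof (induction M rule: dec_induct)
  case (step k)
  have k: "real k \<ge> 1" using step by simp
  have "ln (real k / (real k + 1)) \<le> real k / (real k + 1) - 1"
    using k by (intro ln_le_minus_one) auto
  also have "\<dots> = - 1 / (real k + 1)" using k by (simp add: field_simps)
  finally have "1 / (real k + 1) \<le> ln (real k + 1) - ln (real k)"
    using k by (simp add: ln_div)
  thus ?case using step by (simp add: add.commute)
qed simp

lemma sum_divisor_pairs_le:
  fixes G :: "nat \<Rightarrow> nat \<Rightarrow> real"
  assumes "\<And>e f. G e f \<ge> 0"
  shows "(\<Sum>d\<in>{1..M}. \<Sum>e | e dvd d. G e (d div e)) \<le> (\<Sum>e\<in>{1..M}. \<Sum>f\<in>{1..M}. G e f)"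
proof -
  define S where "S = (SIGMA d:{1..M}. {e. e dvd d})"
  define h where "h = (\<lambda>(d::nat, e::nat). (e, d div e))"
  have "inj_on h S" unfolding inj_on_def S_def h_def by (auto elim!: dvdE)
  moreover have "h ` S \<subseteq> {1..M} \<times> {1..M}"
  proof (rule image_subsetI)
    fix p assume "p \<in> S"
    then obtain d e where d: "1 \<le> d" "d \<le> M" and e: "e dvd d" and p: "p = (d, e)"
      by (auto simp: S_def)
    have "e \<le> M" "d div e \<le> M"
      using d dvd_imp_le[OF e] div_le_dividend[of d e] by linarith+
    moreover have "e > 0" "d div e > 0" using d e by (auto elim!: dvdE)
    ultimately show "h p \<in> {1..M} \<times> {1..M}" using d by (simp add: h_def p)
  qed
  ultimately have "(\<Sum>p\<in>S. case_prod G (h p)) \<le> (\<Sum>p\<in>{1..M} \<times> {1..M}. case_prod G p)"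
    using assms by (subst sum.reindex[symmetric, unfolded comp_def]) (auto intro!: sum_mono2)
  moreover have "(\<Sum>d\<in>{1..M}. \<Sum>e | e dvd d. G e (d div e)) = (\<Sum>p\<in>S. case_prod G (h p))"
    unfolding S_def h_def by (subst sum.Sigma) (auto simp: case_prod_beta)
  ultimately show ?thesis by (simp add: sum.cartesian_product)
qed

lemma tau_harmonic_sum_Suc_le: "tau_harmonic_sum (Suc L) M \<le> (tau_harmonic_sum L M)^2"
proof -
  define G where "G = (\<lambda>e f. real (tau e) ^ L / real e * (real (tau f) ^ L / real f))"
  have "tau_harmonic_sum (Suc L) M = (\<Sum>d\<in>{1..M}. \<Sum>e | e dvd d. real (tau d) ^ L / real d)"
    unfolding tau_harmonic_sum_def by (intro sum.cong refl) (simp add: tau_def)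
  also have "\<dots> \<le> (\<Sum>d\<in>{1..M}. \<Sum>e | e dvd d. G e (d div e))"
  proof (intro sum_mono)
    fix d e assume d: "d \<in> {1..M}" and e: "e \<in> {e. e dvd d}"
    then obtain f where f: "d = e * f" by auto
    with d have pos: "e > 0" "f > 0" by auto
    have "real (tau d) ^ L \<le> (real (tau e) * real (tau f)) ^ L"
      using tau_mult_le[OF pos] f by (intro power_mono) (auto simp flip: of_nat_mult)
    thus "real (tau d) ^ L / real d \<le> G e (d div e)"
      using pos f by (simp add: G_def power_mult_distrib divide_right_mono)
  qed
  also have "\<dots> \<le> (\<Sum>e\<in>{1..M}. \<Sum>f\<in>{1..M}. G e f)"
    by (rule sum_divisor_pairs_le) (simp add: G_def)
  also have "\<dots> = (tau_harmonic_sum L M)^2"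
    by (simp add: tau_harmonic_sum_def G_def power2_eq_square sum_product)
  finally show ?thesis .
qed

lemma tau_harmonic_sum_le: "M \<ge> 1 \<Longrightarrow> tau_harmonic_sum L M \<le> (1 + ln (real M)) ^ (2^L)"
proof (induction L)
  case 0
  then show ?case using harmonic_sum_le_ln[of M] by (simp add: tau_harmonic_sum_def)
next
  case (Suc L)
  have "tau_harmonic_sum (Suc L) M \<le> (tau_harmonic_sum L M)^2" by (rule tau_harmonic_sum_Suc_le)
  also have "\<dots> \<le> ((1 + ln (real M)) ^ (2^L))^2"
    using Suc tau_harmonic_sum_nonneg by (intro power_mono) auto
  also have "\<dots> = (1 + ln (real M)) ^ (2^Suc L)" by (simp flip: power_mult add: mult.commute)
  finally show ?case .
qed

lemma dvd_gcd_mult_gcd: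
  fixes u v D :: int
  assumes "D dvd u * v"
  shows "D dvd gcd u D * gcd v D"
proof -
  obtain s t where st: "s * u + t * D = gcd u D" using bezout_int by blast
  obtain s' t' where st': "s' * v + t' * D = gcd v D" using bezout_int by blast
  have "gcd u D * gcd v D = s * s' * (u * v) + D * (s * u * t' + t * s' * v + t * t' * D)"
    unfolding st[symmetric] st'[symmetric] by (simp add: algebra_simps)
  thus ?thesis using assms by simp
qed

lemma dvd_double_if_dvd_gcd_pair:
  fixes D g1 g2 t :: int
  assumes "D dvd g1 * g2" "gcd g1 g2 dvd 2" "g1 dvd t" "g2 dvd t"
  shows "D dvd 2 * t"
proof -
  have "D dvd gcd g1 g2 * lcm g1 g2"
    using assms(1) by (simp flip: prod_gcd_lcm_int abs_mult)
  also have "\<dots> dvd 2 * t" using assms(2-4) by (intro mult_dvd_mono lcm_least)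
  finally show ?thesis .
qed

lemma complementary_divisor_cases:
  fixes g1 g2 D :: int
  assumes "D > 0" "g1 > 0" "g2 > 0" "g1 dvd D" "g2 dvd D" "D dvd g1 * g2" "gcd g1 g2 dvd 2"
  shows "g2 = D div g1 \<or> g2 = 2 * D div g1"
proof -
  obtain t where t: "g1 * g2 = D * t" using assms(6) by blast
  obtain r s where r: "D = g1 * r" and s: "D = g2 * s" using assms(4,5) by blast
  have "g1 * g2 = g2 * (s * t)" using t s by (simp add: algebra_simps)
  hence g1: "g1 = s * t" using assms(3) by simp
  have "g1 * g2 = g1 * (r * t)" using t r by (simp add: algebra_simps)
  hence g2: "g2 = r * t" using assms(2) by simp
  have "t dvd gcd g1 g2" using g1 g2 by simp
  hence "t dvd 2" using assms(7) by (rule dvd_trans)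
  moreover have "t > 0" using t assms(1-3) by (metis mult_pos_pos zero_less_mult_pos)
  ultimately have "t = 1 \<or> t = 2" using zdvd_imp_le[of t 2] by auto
  moreover have "t * D div g1 = g2" using t[symmetric] assms(2) by (simp add: mult.commute)
  ultimately show ?thesis by auto
qed

lemma card_divisor_pairs_le:
  fixes d :: nat and S :: "(int \<times> int) set"
  assumes "d \<ge> 1"
    and "\<And>g1 g2. (g1, g2) \<in> S \<Longrightarrow>
           0 < g1 \<and> 0 < g2 \<and> g1 dvd int d \<and> g2 dvd int d \<and> int d dvd g1 * g2 \<and> gcd g1 g2 dvd 2"
  shows "card S \<le> 2 * tau d"
proof -
  define \<psi> where "\<psi> = (\<lambda>(g, t). (int g, t * int d div int g))"
  have "S \<subseteq> \<psi> ` ({g. g dvd d} \<times> {1, 2})"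
  proof clarify
    fix g1 g2 assume "(g1, g2) \<in> S"
    hence g: "0 < g1" "0 < g2" "g1 dvd int d" "g2 dvd int d" "int d dvd g1 * g2" "gcd g1 g2 dvd 2"
      using assms(2) by blast+
    have "g2 = int d div g1 \<or> g2 = 2 * int d div g1"
      using assms(1) g by (intro complementary_divisor_cases) auto
    moreover have "nat g1 dvd d" using g(1,3) by (simp add: nat_dvd_iff)
    ultimately show "(g1, g2) \<in> \<psi> ` ({g. g dvd d} \<times> {1, 2})"
      using g(1) by (auto simp: \<psi>_def image_iff intro!: bexI[of _ "(nat g1, _)"])
  qed
  hence "card S \<le> card (\<psi> ` ({g. g dvd d} \<times> {1, 2}))"
    using assms(1) by (intro card_mono) auto
  also have "\<dots> \<le> card ({g. g dvd d} \<times> {1::int, 2})"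
    using assms(1) by (intro card_image_le) auto
  finally show ?thesis by (simp add: tau_def card_cartesian_product)
qed

lemma coprime_if_dvd_square_plus:
  fixes a h d :: nat
  assumes "coprime a h" "d dvd a^2 + h"
  shows "coprime a d"
proof -
  have "coprime a (a^2 + h)"
    using assms(1) gcd_add_mult[of a a h] by (simp add: coprime_iff_gcd_eq_1 power2_eq_square add.commute)
  thus ?thesis using assms(2) by (meson coprime_divisors dvd_refl)
qed

text \<open>For two roots a, a0 of x^2 \<equiv> -h (mod d) with (a0, d) = 1, the gcds of d with a - a0 and
  a + a0 are almost coprime with product divisible by d: so the second is determined by the first
  up to a factor 2, and the pair determines a modulo d/2.\<close>
lemma root_gcd_pair:
  fixes a a0 h d :: nat
  assumes "d dvd a^2 + h" "d dvd a0^2 + h" "coprime a0 d"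
  shows "int d dvd gcd (int a - int a0) (int d) * gcd (int a + int a0) (int d)"
    and "gcd (gcd (int a - int a0) (int d)) (gcd (int a + int a0) (int d)) dvd 2"
proof -
  have "int d dvd int (a^2 + h) - int (a0^2 + h)"
    using assms(1,2) by (intro dvd_diff) (simp_all only: of_nat_dvd_iff)
  also have "int (a^2 + h) - int (a0^2 + h) = (int a - int a0) * (int a + int a0)"
    by (simp add: algebra_simps power2_eq_square)
  finally show "int d dvd gcd (int a - int a0) (int d) * gcd (int a + int a0) (int d)"
    by (rule dvd_gcd_mult_gcd)
next
  define c where "c = gcd (gcd (int a - int a0) (int d)) (gcd (int a + int a0) (int d))"
  have c: "c dvd int a - int a0" "c dvd int a + int a0" "c dvd int d"
    unfolding c_def by (meson dvd_trans gcd_dvd1 gcd_dvd2)+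
  have "c dvd (int a + int a0) - (int a - int a0)" using dvd_diff[OF c(2,1)] .
  hence "c dvd 2 * int a0" by simp
  moreover have "coprime c (int a0)"
    using assms(3) c(3) by (metis coprime_commute coprime_divisors coprime_int_iff dvd_refl)
  ultimately show "c dvd 2" by (simp add: coprime_dvd_mult_left_iff)
qed

lemma double_mod_eq_if_root_gcds_eq:
  fixes a a' a0 h d :: nat
  assumes "d dvd a^2 + h" "d dvd a0^2 + h" "coprime a0 d"
    and "gcd (int a - int a0) (int d) = gcd (int a' - int a0) (int d)"
    and "gcd (int a + int a0) (int d) = gcd (int a' + int a0) (int d)"
  shows "2 * a mod d = 2 * a' mod d"
proof -
  have "gcd (int a - int a0) (int d) dvd (int a - int a0) - (int a' - int a0)"
    by (rule dvd_diff) (simp, subst assms(4), simp)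
  moreover have "gcd (int a + int a0) (int d) dvd (int a + int a0) - (int a' + int a0)"
    by (rule dvd_diff) (simp, subst assms(5), simp)
  ultimately have "gcd (int a - int a0) (int d) dvd int a - int a'"
    "gcd (int a + int a0) (int d) dvd int a - int a'" by simp_all
  hence "int d dvd 2 * (int a - int a')"
    by (rule dvd_double_if_dvd_gcd_pair[OF root_gcd_pair[OF assms(1-3)]])
  hence "int (2 * a mod d) = int (2 * a' mod d)" by (simp add: mod_eq_dvd_iff algebra_simps of_nat_mod)
  thus ?thesis by (simp only: of_nat_eq_iff)
qed

lemma card_le_if_double_mod_eq:
  fixes S :: "nat set" and d M :: nat
  assumes "S \<subseteq> {..M}" "\<And>a a'. a \<in> S \<Longrightarrow> a' \<in> S \<Longrightarrow> 2 * a mod d = 2 * a' mod d"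
  shows "card S \<le> 2 * M div d + 1"
proof -
  have "inj_on (\<lambda>a. 2 * a div d) S"
  proof (rule inj_onI)
    fix a a' assume "a \<in> S" "a' \<in> S" "2 * a div d = 2 * a' div d"
    hence "2 * a = 2 * a'" using assms(2) by (metis div_mult_mod_eq)
    thus "a = a'" by simp
  qed
  hence "card S = card ((\<lambda>a. 2 * a div d) ` S)" by (simp add: card_image)
  also have "\<dots> \<le> card {0..2 * M div d}"
    using assms(1) by (intro card_mono) (auto simp: subset_iff intro!: div_le_mono)
  finally show ?thesis by simp
qed

lemma card_sqrt_neg_mod_le:
  fixes d h M :: nat
  assumes "d \<ge> 1"
  shows "card {a. 1 \<le> a \<and> a \<le> M \<and> coprime a h \<and> d dvd a^2 + h} \<le> 2 * tau d * (2 * M div d + 1)"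
proof -
  define T where "T = {a. 1 \<le> a \<and> a \<le> M \<and> coprime a h \<and> d dvd a^2 + h}"
  have finT: "finite T" by (rule finite_subset[of _ "{..M}"]) (auto simp: T_def)
  have "card T \<le> 2 * tau d * (2 * M div d + 1)"
  proof (cases "T = {}")
    case True
    then show ?thesis by simp
  next
    case False
    then obtain a0 where a0: "a0 \<in> T" by blast
    define D where "D = int d"
    define \<phi> where "\<phi> = (\<lambda>a::nat. (gcd (int a - int a0) D, gcd (int a + int a0) D))"
    have root: "D dvd fst (\<phi> a) * snd (\<phi> a)" "gcd (fst (\<phi> a)) (snd (\<phi> a)) dvd 2" if "a \<in> T" for a
      using root_gcd_pair[of d a h a0] coprime_if_dvd_square_plus[of a0 h d] that a0
      by (auto simp: T_def \<phi>_def D_def)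
    have card_image: "card (\<phi> ` T) \<le> 2 * tau d"
      using assms root by (intro card_divisor_pairs_le) (auto simp: \<phi>_def D_def)
    have card_fibre: "card {a\<in>T. \<phi> a = y} \<le> 2 * M div d + 1" for y
      using a0 coprime_if_dvd_square_plus[of a0 h d]
      by (intro card_le_if_double_mod_eq) (auto simp: T_def \<phi>_def D_def intro: double_mod_eq_if_root_gcds_eq)
    have "card T = (\<Sum>y\<in>\<phi> ` T. card {a\<in>T. \<phi> a = y})"
      using sum.group[OF finT finite_imageI[OF finT] subset_refl, where g = \<phi> and h = "\<lambda>_. 1::nat"] by simp
    also have "\<dots> \<le> card (\<phi> ` T) * (2 * M div d + 1)"
      using sum_bounded_above[of "\<phi> ` T", OF card_fibre] by simp
    also have "\<dots> \<le> 2 * tau d * (2 * M div d + 1)" using card_image by (rule mult_le_mono1)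
    finally show ?thesis .
  qed
  thus ?thesis by (simp add: T_def)
qed

lemma card_sqrt_neg_mod_le_real:
  fixes d h M :: nat
  assumes "1 \<le> d" "d \<le> M"
  shows "real (card {a. 1 \<le> a \<and> a \<le> M \<and> coprime a h \<and> d dvd a^2 + h})
           \<le> 6 * real (tau d) * real M / real d"
proof -
  have "real (2 * M div d) \<le> 2 * real M / real d"
    using of_nat_div_le_of_nat[of "2 * M" d] by simp
  hence div_le: "real (2 * M div d) + 1 \<le> 3 * real M / real d"
    using assms by (simp add: field_simps)
  have "real (card {a. 1 \<le> a \<and> a \<le> M \<and> coprime a h \<and> d dvd a^2 + h})
          \<le> real (2 * tau d * (2 * M div d + 1))"
    using card_sqrt_neg_mod_le[OF assms(1), of M h] by (simp only: of_nat_le_iff)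
  also have "\<dots> = 2 * real (tau d) * (real (2 * M div d) + 1)" by (simp add: algebra_simps)
  also have "\<dots> \<le> 2 * real (tau d) * (3 * real M / real d)"
    using div_le by (intro mult_left_mono) auto
  finally show ?thesis by simp
qed

lemma le_nat_floor_sqrt:
  fixes k :: nat
  assumes "real k ^ 2 \<le> x"
  shows "k \<le> nat \<lfloor>sqrt x\<rfloor>"
  using assms by (intro le_nat_floor real_le_rsqrt) simp

text \<open>The divisors d \<le> \<surd>x of a^2 + h control \<tau>(a^2 + h), and each such d divides a^2 + h for
  only O(\<tau>(d) \<surd>x / d) values of a.\<close>
lemma sum_tau_pow_shifted_squares_le:
  fixes h m :: nat and x :: real
  defines "M \<equiv> nat \<lfloor>sqrt x\<rfloor>"
  shows "(\<Sum>a | 1 \<le> a \<and> coprime a h \<and> real (a^2 + h) \<le> x. real (tau (a^2 + h)) ^ m)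
           \<le> 6 * 2^m * real M * tau_harmonic_sum (2*m + 1) M"
proof -
  define A where "A = {a. 1 \<le> a \<and> coprime a h \<and> real (a^2 + h) \<le> x}"
  define F where "F = (\<lambda>n d. if d dvd n then real (tau d) ^ (2*m) else 0)"
  have aM: "a \<le> M" if "real (a^2 + h) \<le> x" for a
    unfolding M_def using that by (intro le_nat_floor_sqrt) simp
  have finA: "finite A" by (rule finite_subset[of _ "{..M}"]) (auto simp: A_def aM)
  have "(\<Sum>a\<in>A. real (tau (a^2 + h)) ^ m) \<le> (\<Sum>a\<in>A. 2^m * (\<Sum>d\<in>{1..M}. F (a^2 + h) d))"
  proof (rule sum_mono)
    fix a assume a: "a \<in> A"
    show "real (tau (a^2 + h)) ^ m \<le> 2^m * (\<Sum>d\<in>{1..M}. F (a^2 + h) d)"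
      unfolding F_def
    proof (rule tau_pow_le_sum_small_divisors)
      show "a^2 + h > 0" using a by (auto simp: A_def)
      fix d :: nat assume "d^2 \<le> a^2 + h"
      hence "real (d^2) \<le> real (a^2 + h)" by (simp only: of_nat_le_iff)
      hence "real d ^ 2 \<le> x" using a by (simp add: A_def)
      thus "d \<le> M" unfolding M_def by (rule le_nat_floor_sqrt)
    qed
  qed
  also have "\<dots> = 2^m * (\<Sum>d\<in>{1..M}. \<Sum>a\<in>A. F (a^2 + h) d)"
    by (simp add: sum_distrib_left[symmetric] sum.swap[of _ A])
  also have "\<dots> = 2^m * (\<Sum>d\<in>{1..M}. real (card {a\<in>A. d dvd a^2 + h}) * real (tau d) ^ (2*m))"
    unfolding F_def sum.inter_filter[OF finA, symmetric] by simp
  also have "\<dots> \<le> 2^m * (\<Sum>d\<in>{1..M}. 6 * real (tau d) * real M / real d * real (tau d) ^ (2*m))"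
  proof (intro mult_left_mono sum_mono mult_right_mono)
    fix d assume d: "d \<in> {1..M}"
    have "card {a\<in>A. d dvd a^2 + h} \<le> card {a. 1 \<le> a \<and> a \<le> M \<and> coprime a h \<and> d dvd a^2 + h}"
      by (rule card_mono) (auto simp: A_def aM)
    thus "real (card {a\<in>A. d dvd a^2 + h}) \<le> 6 * real (tau d) * real M / real d"
      using card_sqrt_neg_mod_le_real[of d M h] d by simp
  qed auto
  also have "\<dots> = 6 * 2^m * real M * tau_harmonic_sum (2*m + 1) M"
    by (simp add: tau_harmonic_sum_def sum_distrib_left field_simps)
  finally show ?thesis by (simp add: A_def)
qed

lemma finite_nat_real_le: "finite {n::nat. real n \<le> y}"
  by (rule finite_subset[of _ "{..nat \<lfloor>y\<rfloor>}"]) (auto intro: le_nat_floor)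

lemma sum_tau_pow_countd_le:
  fixes c :: "nat \<Rightarrow> real" and Ds :: "nat set"
  assumes "finite Ds" "\<And>n. c n \<ge> 0" "c 0 = 0"
  shows "(\<Sum>d\<in>Ds. real (tau d) ^ k * countd c x d)
           \<le> (\<Sum>n | real n \<le> x. c n * real (tau n) ^ Suc k)"
proof -
  define N where "N = {n::nat. real n \<le> x}"
  have finN: "finite N" unfolding N_def by (rule finite_nat_real_le)
  have "(\<Sum>d\<in>Ds. real (tau d) ^ k * countd c x d)
          = (\<Sum>d\<in>Ds. \<Sum>n\<in>{n\<in>N. d dvd n}. c n * real (tau d) ^ k)"
    by (simp add: countd_def N_def sum_distrib_left mult.commute)
  also have "\<dots> = (\<Sum>n\<in>N. \<Sum>d\<in>{d\<in>Ds. d dvd n}. c n * real (tau d) ^ k)"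
    by (rule sum.swap_restrict[OF assms(1) finN])
  also have "\<dots> = (\<Sum>n\<in>N. c n * (\<Sum>d\<in>{d\<in>Ds. d dvd n}. real (tau d) ^ k))"
    by (simp add: sum_distrib_left)
  also have "\<dots> \<le> (\<Sum>n\<in>N. c n * real (tau n) ^ Suc k)"
  proof (rule sum_mono)
    fix n
    have "(\<Sum>d\<in>{d\<in>Ds. d dvd n}. real (tau d) ^ k) \<le> real (tau n) ^ Suc k" if "n > 0"
    proof -
      have "(\<Sum>d\<in>{d\<in>Ds. d dvd n}. real (tau d) ^ k) \<le> (\<Sum>d | d dvd n. real (tau d) ^ k)"
        using that by (intro sum_mono2) auto
      also have "\<dots> \<le> real (tau n) ^ Suc k" using that by (rule sum_tau_pow_divisors_le)
      finally show ?thesis .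
    qed
    thus "c n * (\<Sum>d\<in>{d\<in>Ds. d dvd n}. real (tau d) ^ k) \<le> c n * real (tau n) ^ Suc k"
      using assms(2,3) by (cases "n = 0") (auto intro: mult_left_mono)
  qed
  finally show ?thesis by (simp add: N_def)
qed

definition sq_plus_pow_seq :: "nat \<Rightarrow> (nat \<Rightarrow> bool) \<Rightarrow> (nat \<Rightarrow> real) \<Rightarrow> real \<Rightarrow> nat \<Rightarrow> real" where
  "sq_plus_pow_seq j P w x n = (if real n \<le> x then
     (\<Sum>(a, p) \<in> {(a, p). a \<ge> 1 \<and> P p \<and> coprime a p \<and> n = a^2 + p^j}. w p) else 0)"

lemma seqA_eq_sq_plus_pow_seq:
  "seqA x X = sq_plus_pow_seq 4 (\<lambda>p. prime p \<and> inI x X (real (p^2))) (\<lambda>p. 2 * real p * ln (real p)) x"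
  by (auto simp: seqA_def sq_plus_pow_seq_def conj_ac)

lemma seqB_eq_sq_plus_pow_seq:
  "seqB x X = sq_plus_pow_seq 2 (\<lambda>p. prime p \<and> inI x X (real p)) (\<lambda>p. ln (real p)) x"
  by (auto simp: seqB_def sq_plus_pow_seq_def conj_ac)

lemma sq_plus_pow_seq_nonneg:
  "(\<And>p. P p \<Longrightarrow> w p \<ge> 0) \<Longrightarrow> sq_plus_pow_seq j P w x n \<ge> 0"
  unfolding sq_plus_pow_seq_def by (auto intro!: sum_nonneg)

lemma sq_plus_pow_seq_zero: "sq_plus_pow_seq j P w x 0 = 0"
proof -
  have "{(a, p). a \<ge> 1 \<and> P p \<and> coprime a p \<and> (0::nat) = a^2 + p^j} = {}" by auto
  thus ?thesis unfolding sq_plus_pow_seq_def by (subst \<open>_ = {}\<close>) simp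
qed

lemma sum_sq_plus_pow_seq_eq:
  fixes F :: "nat \<Rightarrow> real"
  assumes finP: "finite {p. P p}" and j: "j \<ge> 1"
  shows "(\<Sum>n | real n \<le> x. sq_plus_pow_seq j P w x n * F n)
           = (\<Sum>p | P p. w p * (\<Sum>a | 1 \<le> a \<and> coprime a (p^j) \<and> real (a^2 + p^j) \<le> x. F (a^2 + p^j)))"
proof -
  define N where "N = {n::nat. real n \<le> x}"
  define R where "R = {(a, p). a \<ge> 1 \<and> P p \<and> coprime a p \<and> real (a^2 + p^j) \<le> x}"
  define g :: "nat \<times> nat \<Rightarrow> nat" where "g = (\<lambda>(a, p). a^2 + p^j)"
  have "a \<le> nat \<lfloor>x\<rfloor>" if "real (a^2 + p^j) \<le> x" for a p
  proof -
    have "a \<le> a^2 + p^j" by (cases "a = 0") (simp_all add: le_add1 self_le_power trans_le_add1)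
    hence "real a \<le> real (a^2 + p^j)" by (simp only: of_nat_le_iff)
    thus ?thesis using that by (intro le_nat_floor) linarith
  qed
  hence finR: "finite R"
    by (intro finite_subset[OF _ finite_cartesian_product[OF finite_atMost finP]])
       (auto simp: R_def)
  have "(\<Sum>n\<in>N. sq_plus_pow_seq j P w x n * F n) = (\<Sum>n\<in>N. \<Sum>q\<in>{q\<in>R. g q = n}. w (snd q) * F (g q))"
  proof (rule sum.cong)
    fix n assume "n \<in> N"
    hence "{(a, p). a \<ge> 1 \<and> P p \<and> coprime a p \<and> n = a^2 + p^j} = {q\<in>R. g q = n}"
      by (auto simp: N_def R_def g_def)
    thus "sq_plus_pow_seq j P w x n * F n = (\<Sum>q\<in>{q\<in>R. g q = n}. w (snd q) * F (g q))"
      using \<open>n \<in> N\<close> by (simp add: sq_plus_pow_seq_def N_def sum_distrib_right case_prod_beta)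
  qed simp
  also have "\<dots> = (\<Sum>q\<in>R. w (snd q) * F (g q))"
    by (rule sum.group[OF finR finite_nat_real_le[of x, folded N_def]]) (auto simp: R_def N_def g_def)
  also have "\<dots> = (\<Sum>p | P p. \<Sum>q\<in>{q\<in>R. snd q = p}. w (snd q) * F (g q))"
    by (rule sum.group[OF finR finP, symmetric]) (auto simp: R_def)
  also have "\<dots> = (\<Sum>p | P p. w p * (\<Sum>a | 1 \<le> a \<and> coprime a (p^j) \<and> real (a^2 + p^j) \<le> x. F (a^2 + p^j)))"
  proof (rule sum.cong)
    fix p assume "p \<in> {p. P p}"
    hence "{q\<in>R. snd q = p} = (\<lambda>a. (a, p)) ` {a. 1 \<le> a \<and> coprime a (p^j) \<and> real (a^2 + p^j) \<le> x}"
      using j by (auto simp: R_def)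
    thus "(\<Sum>q\<in>{q\<in>R. snd q = p}. w (snd q) * F (g q))
            = w p * (\<Sum>a | 1 \<le> a \<and> coprime a (p^j) \<and> real (a^2 + p^j) \<le> x. F (a^2 + p^j))"
      by (simp add: sum.reindex inj_on_def sum_distrib_left g_def)
  qed simp
  finally show ?thesis by (simp add: N_def)
qed

lemma tau_harmonic_sum_floor_sqrt_le:
  fixes x :: real
  assumes "x > 0" "ln x \<ge> 2"
  shows "real (nat \<lfloor>sqrt x\<rfloor>) * tau_harmonic_sum L (nat \<lfloor>sqrt x\<rfloor>) \<le> sqrt x * ln x ^ (2^L)"
proof -
  define M where "M = nat \<lfloor>sqrt x\<rfloor>"
  have "1 \<le> x" using assms ln_ge_zero_iff[of x] by linarith
  hence "1 \<le> sqrt x" by simp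
  hence M: "M \<ge> 1" "real M \<le> sqrt x" by (auto simp: M_def le_nat_floor)
  have "ln (real M) \<le> ln (sqrt x)" using M by (intro ln_mono) auto
  also have "\<dots> = ln x / 2" using assms by (simp add: ln_sqrt)
  finally have ln_M: "1 + ln (real M) \<le> ln x" using assms by simp
  have "tau_harmonic_sum L M \<le> (1 + ln (real M)) ^ (2^L)" by (rule tau_harmonic_sum_le[OF M(1)])
  also have "\<dots> \<le> ln x ^ (2^L)" using ln_M M by (intro power_mono) auto
  finally show ?thesis unfolding M_def[symmetric]
    using assms M tau_harmonic_sum_nonneg by (intro mult_mono) auto
qed

lemma sum_tau_pow_countd_sq_plus_pow_seq_le:
  fixes x :: real and Ds :: "nat set"
  assumes x: "x > 0" "ln x \<ge> 2" and Ds: "finite Ds" and j: "j \<ge> 1"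
    and P: "finite {p. P p}" and w: "\<And>p. P p \<Longrightarrow> w p \<ge> 0"
  shows "(\<Sum>d\<in>Ds. real (tau d) ^ k * countd (sq_plus_pow_seq j P w x) x d)
           \<le> 6 * 2^(k+1) * sqrt x * ln x ^ (2^(2*k+3)) * (\<Sum>p | P p. w p)"
proof -
  define m where "m = Suc k"
  define M where "M = nat \<lfloor>sqrt x\<rfloor>"
  define K where "K = 6 * 2^m * real M * tau_harmonic_sum (2*m + 1) M"
  have K: "K \<le> 6 * 2^m * sqrt x * ln x ^ (2^(2*m + 1))"
    using tau_harmonic_sum_floor_sqrt_le[OF x, of "2*m + 1"] by (simp add: K_def M_def mult.assoc)
  have "(\<Sum>d\<in>Ds. real (tau d) ^ k * countd (sq_plus_pow_seq j P w x) x d)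
          \<le> (\<Sum>n | real n \<le> x. sq_plus_pow_seq j P w x n * real (tau n) ^ m)"
    unfolding m_def using Ds by (intro sum_tau_pow_countd_le sq_plus_pow_seq_nonneg sq_plus_pow_seq_zero w)
  also have "\<dots> = (\<Sum>p | P p. w p *
      (\<Sum>a | 1 \<le> a \<and> coprime a (p^j) \<and> real (a^2 + p^j) \<le> x. real (tau (a^2 + p^j)) ^ m))"
    by (rule sum_sq_plus_pow_seq_eq[OF P j])
  also have "\<dots> \<le> (\<Sum>p | P p. w p * K)"
  proof (intro sum_mono mult_left_mono)
    fix p
    show "(\<Sum>a | 1 \<le> a \<and> coprime a (p^j) \<and> real (a^2 + p^j) \<le> x. real (tau (a^2 + p^j)) ^ m) \<le> K"
      unfolding K_def M_def by (rule sum_tau_pow_shifted_squares_le)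
  qed (simp add: w)
  also have "\<dots> = K * (\<Sum>p | P p. w p)" by (simp add: sum_distrib_left mult.commute)
  also have "\<dots> \<le> 6 * 2^m * sqrt x * ln x ^ (2^(2*m + 1)) * (\<Sum>p | P p. w p)"
    using K w by (intro mult_right_mono sum_nonneg) auto
  finally have "(\<Sum>d\<in>Ds. real (tau d) ^ k * countd (sq_plus_pow_seq j P w x) x d)
      \<le> 6 * 2^m * sqrt x * ln x ^ (2^(2*m + 1)) * (\<Sum>p | P p. w p)" .
  moreover have "2 * m + 1 = 2 * k + 3" by (simp add: m_def)
  ultimately show ?thesis by (simp only: m_def Suc_eq_plus1)
qed

lemma sum_nat_interval_le:
  fixes \<alpha> \<beta> B :: real and f :: "nat \<Rightarrow> real"
  assumes "0 \<le> \<alpha>" "\<alpha> \<le> \<beta>" "B \<ge> 0" "\<And>p. \<alpha> < real p \<Longrightarrow> real p \<le> \<beta> \<Longrightarrow> f p \<le> B"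
  shows "(\<Sum>p | \<alpha> < real p \<and> real p \<le> \<beta>. f p) \<le> (\<beta> - \<alpha> + 1) * B"
proof -
  have "{p::nat. \<alpha> < real p \<and> real p \<le> \<beta>} \<subseteq> {nat \<lfloor>\<alpha>\<rfloor> + 1 .. nat \<lfloor>\<beta>\<rfloor>}"
    using assms(1) by (auto intro: le_nat_floor simp: floor_less_iff nat_less_iff Suc_le_eq)
  hence "card {p::nat. \<alpha> < real p \<and> real p \<le> \<beta>} \<le> nat \<lfloor>\<beta>\<rfloor> - nat \<lfloor>\<alpha>\<rfloor>"
    using card_mono[of "{nat \<lfloor>\<alpha>\<rfloor> + 1 .. nat \<lfloor>\<beta>\<rfloor>}"] by simp
  also have "real (nat \<lfloor>\<beta>\<rfloor> - nat \<lfloor>\<alpha>\<rfloor>) \<le> \<beta> - \<alpha> + 1"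
    using assms(1,2) floor_mono[OF assms(2)] by (simp add: of_nat_diff) linarith
  finally have card: "real (card {p::nat. \<alpha> < real p \<and> real p \<le> \<beta>}) \<le> \<beta> - \<alpha> + 1"
    by (meson of_nat_le_iff order_trans)
  have "(\<Sum>p | \<alpha> < real p \<and> real p \<le> \<beta>. f p) \<le> (\<Sum>p | \<alpha> < real p \<and> real p \<le> \<beta>. B)"
    using assms(4) by (intro sum_mono) auto
  also have "\<dots> \<le> (\<beta> - \<alpha> + 1) * B" using card assms(3) by (simp add: mult_right_mono)
  finally show ?thesis .
qed

lemma ln_le_sqrt_sqrt:
  fixes x :: real
  assumes "x \<ge> 2^32"
  shows "ln x \<le> sqrt (sqrt x)"
proof -
  define s where "s = sqrt (sqrt (sqrt x))"
  have "x > 0" using assms by simp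
  hence s: "s > 0" "s^2 = sqrt (sqrt x)" by (simp_all add: s_def)
  have "s^8 = ((s^2)^2)^2" by (simp flip: power_mult)
  hence s8: "s^8 = x" using \<open>x > 0\<close> by (simp add: s(2))
  have "(16::real)^8 \<le> s^8" using assms unfolding s8 by simp
  hence "16 \<le> s" using power_mono_iff[of 16 s 8] s(1) by simp
  have "ln x = 8 * ln s" using s(1) by (simp flip: s8 add: ln_realpow)
  also have "\<dots> \<le> 8 * s" using s(1) ln_le_minus_one[of s] by simp
  also have "\<dots> \<le> s^2" using \<open>16 \<le> s\<close> by (simp add: power2_eq_square)
  finally show ?thesis using s(2) by simp
qed

lemma two_le_ln:
  fixes x :: real
  assumes "x \<ge> 2^32"
  shows "2 \<le> ln x"
proof -
  have "exp 2 = exp (1::real) ^ 2" by (simp flip: exp_of_nat_mult)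
  also have "\<dots> \<le> 3^2" using exp_le by (intro power_mono) auto
  also have "\<dots> \<le> x" using assms by simp
  finally show ?thesis using assms by (simp add: ln_ge_iff)
qed

lemma finite_inI_pow:
  assumes "j \<ge> 1"
  shows "finite {p::nat. inI x X (real (p^j))}"
proof (rule finite_subset[OF _ finite_nat_real_le])
  show "{p::nat. inI x X (real (p^j))} \<subseteq> {p. real p \<le> X * (1 + 1 / ln x)}"
  proof clarify
    fix p :: nat assume "inI x X (real (p^j))"
    moreover have "p \<le> p^j" using assms by (cases "p = 0") (simp_all add: self_le_power)
    hence "real p \<le> real (p^j)" by (simp only: of_nat_le_iff)
    ultimately show "real p \<le> X * (1 + 1 / ln x)" unfolding inI_def by linarith
  qed
qed

lemma large_x_root_bounds:
  fixes x :: real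
  assumes "x \<ge> 2^32"
  shows "2 \<le> sqrt (sqrt x)" "sqrt (sqrt x) \<le> sqrt x" "2 * sqrt x \<le> x"
proof -
  have s: "2^16 \<le> sqrt x" using assms by (intro real_le_rsqrt) simp
  have "(2::real)^8 \<le> sqrt (sqrt x)" using s assms by (intro real_le_rsqrt) simp
  thus "2 \<le> sqrt (sqrt x)" by simp
  have "0 \<le> sqrt x" using assms by simp
  have "2 * sqrt x \<le> sqrt x * sqrt x" by (rule mult_right_mono) (use s assms in simp_all)
  also have "sqrt x * sqrt x = x" using assms by simp
  finally show "2 * sqrt x \<le> x" .
  with \<open>0 \<le> sqrt x\<close> have "sqrt x \<le> x" by linarith
  thus "sqrt (sqrt x) \<le> sqrt x" by simp
qed

lemma sum_ln_primes_inI_le: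
  fixes x X :: real
  assumes x: "x \<ge> 2^32" and X: "0 < X" "X \<le> sqrt x"
  shows "(\<Sum>p | prime p \<and> inI x X (real p). ln (real p)) \<le> 8 * sqrt x"
proof -
  define L where "L = ln x"
  have L: "2 \<le> L" "L \<le> sqrt (sqrt x)" using two_le_ln[OF x] ln_le_sqrt_sqrt[OF x] by (simp_all add: L_def)
  note roots = large_x_root_bounds[OF x]
  have "(\<Sum>p | prime p \<and> inI x X (real p). ln (real p))
          \<le> (\<Sum>p | X < real p \<and> real p \<le> X * (1 + 1/L). ln (real p))"
    using finite_nat_real_le[of "X * (1 + 1/L)"] X
    by (intro sum_mono2) (auto simp: inI_def L_def elim: finite_subset[rotated])
  also have "\<dots> \<le> (X * (1 + 1/L) - X + 1) * L"
  proof (rule sum_nat_interval_le)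
    fix p :: nat assume p: "X < real p" "real p \<le> X * (1 + 1/L)"
    have "X * (1 + 1/L) \<le> 2 * X" using X L by (simp add: field_simps)
    hence "real p \<le> x" using p X roots by linarith
    thus "ln (real p) \<le> L" using p X by (simp add: L_def)
  qed (use X L in auto)
  also have "\<dots> = X + L" using L by (simp add: field_simps)
  also have "\<dots> \<le> 8 * sqrt x" using X L roots by linarith
  finally show ?thesis .
qed

lemma sqrt_mult_one_plus_le:
  fixes X t :: real
  assumes "0 \<le> X" "0 \<le> t"
  shows "sqrt (X * (1 + t)) \<le> sqrt X * (1 + t)"
proof -
  have "1 + t \<le> (1 + t) * (1 + t)" using assms(2) mult_right_mono[of 1 "1 + t" "1 + t"] by simp
  hence "sqrt (1 + t) \<le> 1 + t" using assms(2) by (intro real_le_lsqrt) (simp_all add: power2_eq_square)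
  thus ?thesis unfolding real_sqrt_mult using assms(1) by (intro mult_left_mono) auto
qed

lemma mult_ln_nonneg: "0 \<le> real p * ln (real p)"
  by (cases "p = 0") simp_all

lemma sum_p_ln_primes_sq_inI_le:
  fixes x X :: real
  assumes x: "x \<ge> 2^32" and X: "0 < X" "X \<le> sqrt x"
  shows "(\<Sum>p | prime p \<and> inI x X (real (p^2)). 2 * real p * ln (real p)) \<le> 8 * sqrt x"
proof -
  define L where "L = ln x"
  define Y where "Y = sqrt (X * (1 + 1/L))"
  have L: "2 \<le> L" "L \<le> sqrt (sqrt x)" using two_le_ln[OF x] ln_le_sqrt_sqrt[OF x] by (simp_all add: L_def)
  note roots = large_x_root_bounds[OF x]
  have sX: "0 < sqrt X" "sqrt X \<le> sqrt (sqrt x)" using X by simp_all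
  have "Y \<le> sqrt X * (1 + 1/L)" unfolding Y_def using X L by (intro sqrt_mult_one_plus_le) auto
  moreover have "sqrt X / L \<le> sqrt X / 1" using sX L by (intro divide_left_mono) auto
  ultimately have Y: "Y \<le> sqrt X + sqrt X / L" "Y \<le> 2 * sqrt X" by (simp_all add: algebra_simps)
  have "{p. prime p \<and> inI x X (real (p^2))} \<subseteq> {p. sqrt X < real p \<and> real p \<le> Y}"
  proof clarify
    fix p :: nat assume "inI x X (real (p^2))"
    hence "X < real p ^ 2" "real p ^ 2 \<le> X * (1 + 1/L)" by (simp_all add: inI_def L_def)
    thus "sqrt X < real p \<and> real p \<le> Y" using X by (auto simp: Y_def intro: real_less_lsqrt real_le_rsqrt)
  qed
  hence "(\<Sum>p | prime p \<and> inI x X (real (p^2)). 2 * real p * ln (real p))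
          \<le> (\<Sum>p | sqrt X < real p \<and> real p \<le> Y. 2 * real p * ln (real p))"
    using mult_ln_nonneg finite_subset[OF _ finite_nat_real_le[of Y]]
    by (intro sum_mono2) (auto simp: mult.assoc)
  also have "\<dots> \<le> (Y - sqrt X + 1) * (2 * (2 * sqrt X) * L)"
  proof (rule sum_nat_interval_le)
    fix p :: nat assume p: "sqrt X < real p" "real p \<le> Y"
    hence "0 < real p" using sX(1) by linarith
    hence p1: "1 \<le> real p" by (simp add: Suc_le_eq)
    have "real p \<le> x" using p Y sX roots by linarith
    hence "ln (real p) \<le> L" unfolding L_def using p1 by (intro ln_mono) auto
    thus "2 * real p * ln (real p) \<le> 2 * (2 * sqrt X) * L"
      using p(2) Y p1 X by (intro mult_mono) auto
  qed (use sX L Y in \<open>auto simp: Y_def\<close>)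
  also have "\<dots> \<le> (sqrt X / L + 1) * (2 * (2 * sqrt X) * L)"
    using Y sX L by (intro mult_right_mono) auto
  also have "\<dots> = 4 * X + 4 * (sqrt X * L)" using sX L X by (simp add: field_simps)
  also have "\<dots> \<le> 8 * sqrt x"
  proof -
    have "sqrt X * L \<le> sqrt (sqrt x) * sqrt (sqrt x)" using sX L x by (intro mult_mono) auto
    thus ?thesis using X x by simp
  qed
  finally show ?thesis .
qed

lemma sum_tau_pow_countd_sq_plus_pow_seq_le_if_weights_le:
  fixes x :: real and Ds :: "nat set"
  assumes x: "2^32 \<le> x" and Ds: "finite Ds" and j: "j \<ge> 1" and P: "finite {p. P p}"
    and w: "\<And>p. P p \<Longrightarrow> w p \<ge> 0" and W: "(\<Sum>p | P p. w p) \<le> 8 * sqrt x"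
  shows "(\<Sum>d\<in>Ds. real (tau d) ^ k * countd (sq_plus_pow_seq j P w x) x d)
           \<le> 48 * 2^(k+1) * x * ln x ^ (2^(2*k+3))"
proof -
  have lnx: "2 \<le> ln x" by (rule two_le_ln[OF x])
  have "(\<Sum>d\<in>Ds. real (tau d) ^ k * countd (sq_plus_pow_seq j P w x) x d)
          \<le> 6 * 2^(k+1) * sqrt x * ln x ^ (2^(2*k+3)) * (\<Sum>p | P p. w p)"
    using x lnx by (intro sum_tau_pow_countd_sq_plus_pow_seq_le Ds j P w) auto
  also have "\<dots> \<le> 6 * 2^(k+1) * sqrt x * ln x ^ (2^(2*k+3)) * (8 * sqrt x)"
    using W lnx x by (intro mult_left_mono) auto
  also have "\<dots> = 48 * 2^(k+1) * (sqrt x * sqrt x) * ln x ^ (2^(2*k+3))" by (simp add: algebra_simps)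
  finally show ?thesis using x by simp
qed

lemma sum_tau_pow_countd_seqA_le:
  fixes x X :: real and Ds :: "nat set"
  assumes x: "2^32 \<le> x" and X: "0 < X" "X \<le> sqrt x" and Ds: "finite Ds"
  shows "(\<Sum>d\<in>Ds. real (tau d) ^ k * countd (seqA x X) x d) \<le> 48 * 2^(k+1) * x * ln x ^ (2^(2*k+3))"
  unfolding seqA_eq_sq_plus_pow_seq
proof (rule sum_tau_pow_countd_sq_plus_pow_seq_le_if_weights_le[OF x Ds])
  show "finite {p. prime p \<and> inI x X (real (p^2))}"
    using finite_inI_pow[of 2 x X] by (auto elim: finite_subset[rotated])
  show "(\<Sum>p | prime p \<and> inI x X (real (p^2)). 2 * real p * ln (real p)) \<le> 8 * sqrt x"
    by (rule sum_p_ln_primes_sq_inI_le[OF x X])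
qed (auto dest: prime_gt_1_nat)

lemma sum_tau_pow_countd_seqB_le:
  fixes x X :: real and Ds :: "nat set"
  assumes x: "2^32 \<le> x" and X: "0 < X" "X \<le> sqrt x" and Ds: "finite Ds"
  shows "(\<Sum>d\<in>Ds. real (tau d) ^ k * countd (seqB x X) x d) \<le> 48 * 2^(k+1) * x * ln x ^ (2^(2*k+3))"
  unfolding seqB_eq_sq_plus_pow_seq
proof (rule sum_tau_pow_countd_sq_plus_pow_seq_le_if_weights_le[OF x Ds])
  show "finite {p. prime p \<and> inI x X (real p)}"
    using finite_inI_pow[of 1 x X] by (auto elim: finite_subset[rotated])
  show "(\<Sum>p | prime p \<and> inI x X (real p). ln (real p)) \<le> 8 * sqrt x"
    by (rule sum_ln_primes_inI_le[OF x X])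
qed (auto dest: prime_gt_1_nat)

theorem mainTheorem11:
  fixes k :: nat and B :: real
  shows "\<exists>C x0. \<forall>x X. x \<ge> x0 \<and> sqrt x / (ln x)^4 \<le> X \<and> X \<le> sqrt x \<longrightarrow>
     (\<Sum>d \<in> {d. 1 \<le> d \<and> real d < x powr (3/4) / (ln x) powr B}.
        real (tau d) ^ k * countd (seqA x X) x d) \<le> C * x * (ln x) ^ (2 ^ (2*k+3))
   \<and> (\<Sum>d \<in> {d. 1 \<le> d \<and> real d < x powr (3/4) / (ln x) powr B}.
        real (tau d) ^ k * countd (seqB x X) x d) \<le> C * x * (ln x) ^ (2 ^ (2*k+3))"
proof -
  have D: "finite {d. 1 \<le> d \<and> real d < x powr (3/4) / (ln x) powr B}" for x :: real
    by (rule finite_subset[OF _ finite_nat_real_le[of "x powr (3/4) / (ln x) powr B"]]) auto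
  have X: "0 < X" if "2^32 \<le> x" "sqrt x / (ln x)^4 \<le> X" for x X :: real
  proof -
    have "0 < sqrt x / (ln x)^4" using that(1) two_le_ln[OF that(1)] by simp
    thus ?thesis using that(2) by linarith
  qed
  show ?thesis
    using sum_tau_pow_countd_seqA_le[OF _ X _ D] sum_tau_pow_countd_seqB_le[OF _ X _ D]
    by (intro exI[of _ "48 * 2^(k+1)"] exI[of _ "2^32"]) blast
qed

end
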